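(* For $1\le l\le m$, $$\pi_l\equiv\pi_m^{p^{m-l}}\pmod{\pi_m^{p^{m-l}+1}},$$ i.e. $\mathrm{ord}_p\big(\pi_l-\pi_m^{p^{m-l}}\big)\ge(p^{m-l}+1)\,\mathrm{ord}_p(\pi_m)$.
   Context: $p$ is a prime, $m\ge1$, $\mathrm{ord}_p(p)=1$, and $E(t)=\exp(\sum_{i\ge0}t^{p^i}/p^i)$ is the Artin–Hasse exponential. Fix a primitive $p^m$-th root of unity $\zeta\in\overline{\mathbb{Q}}_p$. For $l=1,\dots,m$, $\pi_l$ is the unique root in $\overline{\mathbb{Q}}_p$ of $\sum_{i\ge0}t^{p^i}/p^i=0$ with $\mathrm{ord}_p(\pi_l)=\frac1{p^{l-1}(p-1)}$ and $E(\pi_l)=\zeta^{p^{m-l}}$. *)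

theory Defs
  imports "HOL-Computational_Algebra.Computational_Algebra" "HOL-Library.Extended_Real"
begin

definition AH_log_fps :: "nat \<Rightarrow> rat fps" where
  "AH_log_fps p = Abs_fps (\<lambda>n. if (\<exists>i. n = p ^ i) then 1 / of_nat n else 0)"

definition artin_hasse_fps :: "nat \<Rightarrow> rat fps" where
  "artin_hasse_fps p = fps_compose (fps_exp 1) (AH_log_fps p)"

definition is_valuation :: "('a::field \<Rightarrow> ereal) \<Rightarrow> bool" where
  "is_valuation v \<longleftrightarrow>
     (\<forall>x. v x = \<infinity> \<longleftrightarrow> x = 0) \<and> (\<forall>x. v x \<noteq> -\<infinity>) \<and>
     (\<forall>x y. v (x * y) = v x + v y) \<and> (\<forall>x y. v (x + y) \<ge> min (v x) (v y))"

definition val_tendsto :: "('a::field \<Rightarrow> ereal) \<Rightarrow> (nat \<Rightarrow> 'a) \<Rightarrow> 'a \<Rightarrow> bool" where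
  "val_tendsto v s w \<longleftrightarrow> (\<forall>M::real. \<exists>N. \<forall>n\<ge>N. v (s n - w) \<ge> ereal M)"

definition val_sums :: "('a::field \<Rightarrow> ereal) \<Rightarrow> (nat \<Rightarrow> 'a) \<Rightarrow> 'a \<Rightarrow> bool" where
  "val_sums v f w \<longleftrightarrow> val_tendsto v (\<lambda>N. \<Sum>n<N. f n) w"

definition fps_val_eval :: "('a::field_char_0 \<Rightarrow> ereal) \<Rightarrow> rat fps \<Rightarrow> 'a \<Rightarrow> 'a \<Rightarrow> bool" where
  "fps_val_eval v F x w \<longleftrightarrow> val_sums v (\<lambda>n. of_rat (F $ n) * x ^ n) w"

definition primitive_root_of_unity :: "nat \<Rightarrow> 'a::field \<Rightarrow> bool" where
  "primitive_root_of_unity n z \<longleftrightarrow> z ^ n = 1 \<and> (\<forall>k. 0 < k \<and> k < n \<longrightarrow> z ^ k \<noteq> 1)"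

definition alg_closed_field :: "'a::field itself \<Rightarrow> bool" where
  "alg_closed_field _ \<longleftrightarrow> (\<forall>q::'a poly. degree q > 0 \<longrightarrow> (\<exists>x. poly q x = 0))"

end

(*
  Modulo squares of elements of positive valuation, E(t) = 1 + t + O(t^2), provided
  the coefficients of the Artin-Hasse exponential E are p-integral. That integrality follows,
  by induction on the degree, from Dwork's identity E(X^p) = E(X)^p exp(-p X), the Frobenius
  congruence f(X)^p = f(X^p) mod p for p-integral series, and the p-integrality of p^n/n!.

  Hence zeta = E(pi_m) = 1 + x with x = pi_m + O(pi_m^2), and zeta^N = E(pi_l) = 1 + pi_l + O(pi_l^2)
  for N = p^(m-l). In (1 + x)^N = 1 + x^N + (middle terms) every middle binomial coefficient is
  divisible by p, and ord p = 1 >= ord pi_l = N ord pi_m, so the middle terms are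
  O(pi_m^(N+1)). Therefore pi_l = x^N = pi_m^N modulo pi_m^(N+1).
*)

theory Submission
  imports Defs "HOL-Number_Theory.Residues"
begin

section \<open>Binomial coefficients and factorials modulo a prime\<close>

lemma binomial_ring_middle:
  fixes x y :: "'a::comm_semiring_1"
  assumes "n \<ge> 1"
  shows "(x + y) ^ n = x ^ n + y ^ n + (\<Sum>k\<in>{1..<n}. of_nat (n choose k) * x ^ k * y ^ (n - k))"
proof -
  have "{..n} = insert n (insert 0 {1..<n})"
    using assms by auto
  then show ?thesis
    using assms by (simp add: binomial_ring[of x y n] add_ac)
qed

lemma prime_dvd_prime_power_choose:
  fixes p :: nat
  assumes "prime p" and "0 < j" and "j < p ^ k"
  shows "p dvd (p ^ k choose j)"
proof (rule ccontr)
  assume "\<not> p dvd (p ^ k choose j)"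
  then have "coprime (p ^ k) (p ^ k choose j)"
    using assms(1) by (simp add: coprime_power_left_iff prime_imp_coprime)
  moreover have "p ^ k dvd j * (p ^ k choose j)"
    using times_binomial_minus1_eq[OF assms(2), of "p ^ k"] by simp
  ultimately have "p ^ k dvd j"
    by (simp add: coprime_dvd_mult_left_iff)
  then show False
    using assms(2,3) by (simp add: dvd_imp_le leD)
qed

lemma multiplicity_fact_eq:
  fixes p :: nat
  assumes "prime p"
  shows "multiplicity p (fact r :: nat) = r div p + multiplicity p (fact (r div p) :: nat)"
proof (induction r)
  case 0
  then show ?case by simp
next
  case (Suc r)
  have Suc_step: "multiplicity p (fact (Suc r) :: nat) = multiplicity p (Suc r) + multiplicity p (fact r :: nat)"
    using assms by (simp only: fact_Suc of_nat_id) (rule prime_elem_multiplicity_mult_distrib, auto)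
  show ?case
  proof (cases "p dvd Suc r")
    case False
    then have "Suc r div p = r div p"
      using div_Suc by presburger
    with False Suc.IH Suc_step show ?thesis
      by (simp add: not_dvd_imp_multiplicity_0)
  next
    case True
    then obtain s where s: "Suc r = p * s"
      by (elim dvdE)
    have "p > 1" "s > 0"
      using assms s prime_gt_1_nat by (auto intro: gr0I)
    have "Suc r div p = s"
      using s \<open>p > 1\<close> by simp
    moreover have "r div p = s - 1"
    proof -
      have "r = (p - 1) + (s - 1) * p"
        using s \<open>p > 1\<close> \<open>s > 0\<close> by (cases s) (auto simp: mult.commute)
      then show ?thesis
        using \<open>p > 1\<close> by (metis add_cancel_right_right diff_less div_less div_mult_self1
            less_add_one less_imp_add_positive not_gr_zero trans_less_add2)
    qed
    moreover have "multiplicity p (Suc r) = Suc (multiplicity p s)"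
      using s \<open>p > 1\<close> \<open>s > 0\<close> by (simp add: multiplicity_times_same)
    moreover have "multiplicity p (fact s :: nat) = multiplicity p s + multiplicity p (fact (s - 1) :: nat)"
      using assms \<open>s > 0\<close> by (simp add: fact_reduce prime_elem_multiplicity_mult_distrib)
    ultimately show ?thesis
      using Suc_step Suc.IH \<open>s > 0\<close> by simp
  qed
qed

lemma multiplicity_fact_less:
  fixes p :: nat
  assumes "prime p" and "r \<ge> 1"
  shows "multiplicity p (fact r :: nat) < r"
  using assms(2)
proof (induction r rule: less_induct)
  case (less r)
  have "p \<ge> 2"
    using assms(1) prime_ge_2_nat by blast
  then have "2 * (r div p) \<le> p * (r div p)"
    by (rule mult_right_mono) simp
  then have "2 * (r div p) \<le> r"
    using times_div_less_eq_dividend[of p r] by linarith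
  show ?case
  proof (cases "r div p = 0")
    case True
    then show ?thesis
      using multiplicity_fact_eq[OF assms(1), of r] less.prems by simp
  next
    case False
    then have "multiplicity p (fact (r div p) :: nat) < r div p"
      using less.IH[of "r div p"] less.prems \<open>p \<ge> 2\<close> by simp
    then show ?thesis
      using multiplicity_fact_eq[OF assms(1), of r] \<open>2 * (r div p) \<le> r\<close> by simp
  qed
qed

lemma fermat_int:
  fixes p :: nat and a :: int
  assumes "prime p"
  shows "[a ^ p = a] (mod int p)"
proof (cases "int p dvd a")
  case True
  then show ?thesis
    using assms dvd_trans[OF True dvd_power[of p a]] by (simp add: cong_def dvd_imp_mod_0 prime_gt_0_nat)
next
  case False
  have "prime (int p)"
    using assms by simp
  with False have "coprime a (int p)"
    by (metis prime_imp_coprime coprime_commute)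
  moreover have "residues (int p)"
    using prime_gt_1_nat[OF assms] by (simp add: residues_def)
  ultimately have "[a ^ totient p = 1] (mod int p)"
    using residues.euler_theorem[of "int p" a] by simp
  then have "[a ^ (p - 1) = 1] (mod int p)"
    using assms by (simp add: totient_prime)
  then have "[a * a ^ (p - 1) = a * 1] (mod int p)"
    by (rule cong_scalar_left)
  then show ?thesis
    using assms by (simp add: power_eq_if[of a p] prime_gt_0_nat)
qed

section \<open>Formal power series and Dwork's identity\<close>

lemma fps_compose_X_power_nth:
  fixes f :: "'a::idom fps"
  assumes "k > 0"
  shows "(f oo fps_X ^ k) $ n = (if k dvd n then f $ (n div k) else 0)"
proof -
  have "(f oo fps_X ^ k) $ n = (\<Sum>i=0..n. if n = k * i then f $ i else 0)"
    by (auto simp: fps_compose_nth fps_X_power_nth simp flip: power_mult intro!: sum.cong)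
  also have "\<dots> = (\<Sum>i=0..n. if i = n div k \<and> k dvd n then f $ i else 0)"
    using assms by (intro sum.cong) auto
  also have "\<dots> = (if k dvd n then f $ (n div k) else 0)"
    by (simp add: sum.delta')
  finally show ?thesis .
qed

lemma fps_deriv_eq_mult_unique:
  fixes F G C :: "'a::field_char_0 fps"
  assumes "fps_deriv F = F * C" and "fps_deriv G = G * C" and "F $ 0 = G $ 0"
  shows "F = G"
proof -
  have "F $ n = G $ n" for n
  proof (induction n rule: less_induct)
    case (less n)
    show ?case
    proof (cases n)
      case (Suc m)
      have "of_nat (Suc m) * F $ Suc m = (F * C) $ m"
        using fps_deriv_nth[of F m] assms(1) by simp
      also have "\<dots> = (G * C) $ m"
        using less Suc by (auto simp: fps_mult_nth intro!: sum.cong)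
      also have "\<dots> = of_nat (Suc m) * G $ Suc m"
        using fps_deriv_nth[of G m] assms(2) by simp
      finally show ?thesis
        using Suc by (simp del: of_nat_Suc)
    qed (use assms(3) in simp)
  qed
  then show ?thesis
    by (simp add: fps_eq_iff)
qed

lemma fps_power_nth_eq_below:
  fixes f g :: "'a::comm_ring_1 fps"
  assumes "\<And>i. i < n \<Longrightarrow> f $ i = g $ i" and "j < n"
  shows "(f ^ k) $ j = (g ^ k) $ j"
proof -
  have "(f ^ k - g ^ k) $ j = ((f - g) * (\<Sum>i<k. g ^ (k - Suc i) * f ^ i)) $ j"
    by (simp add: power_diff_sumr2)
  also have "\<dots> = 0"
    using assms by (auto simp: fps_mult_nth intro!: sum.neutral)
  finally show ?thesis
    by simp
qed

lemma fps_power_nth_diff_first: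
  fixes f g :: "'a::comm_ring_1 fps"
  assumes "\<And>i. i < n \<Longrightarrow> f $ i = g $ i" and "f $ 0 = 1" and "g $ 0 = 1"
  shows "(f ^ k) $ n - (g ^ k) $ n = of_nat k * (f $ n - g $ n)"
proof -
  define S where "S = (\<Sum>i<k. g ^ (k - Suc i) * f ^ i)"
  have "(f ^ k) $ n - (g ^ k) $ n = ((f - g) * S) $ n"
    unfolding S_def power_diff_sumr2[symmetric] by simp
  also have "\<dots> = (\<Sum>i=0..n. if i = n then (f - g) $ n * S $ 0 else 0)"
    unfolding fps_mult_nth using assms(1) by (intro sum.cong) auto
  also have "S $ 0 = of_nat k"
    by (simp add: S_def fps_sum_nth fps_power_zeroth assms(2,3))
  finally show ?thesis
    by (simp add: mult.commute)
qed

lemma fps_cutoff_Suc: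
  "fps_cutoff (Suc n) f = fps_cutoff n f + fps_const (f $ n) * fps_X ^ n"
  by (rule fps_ext) (auto simp: fps_X_power_nth less_Suc_eq)

lemma fps_deriv_AH_log_nth:
  "fps_deriv (AH_log_fps p) $ n = (if \<exists>i. Suc n = p ^ i then 1 else 0)"
  unfolding AH_log_fps_def by (auto simp del: of_nat_Suc)

lemma AH_log_fps_nth_0 [simp]: "AH_log_fps p $ 0 = 0"
  by (simp add: AH_log_fps_def)

lemma artin_hasse_fps_nth_0 [simp]: "artin_hasse_fps p $ 0 = 1"
  by (simp add: artin_hasse_fps_def)

lemma fps_deriv_artin_hasse:
  "fps_deriv (artin_hasse_fps p) = artin_hasse_fps p * fps_deriv (AH_log_fps p)"
  by (simp add: artin_hasse_fps_def fps_compose_deriv)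

lemma artin_hasse_fps_nth_1 [simp]: "artin_hasse_fps p $ 1 = 1"
proof -
  have "\<exists>i. Suc 0 = p ^ i"
    by (rule exI[of _ 0]) simp
  then have "fps_deriv (AH_log_fps p) $ 0 = 1"
    by (simp only: fps_deriv_AH_log_nth if_True)
  then show ?thesis
    using arg_cong[OF fps_deriv_artin_hasse[of p], of "\<lambda>f. f $ 0"] by (simp del: fps_deriv_nth) simp
qed

lemma add_eq_power_iff:
  fixes p t :: nat
  assumes "1 < p"
  shows "(\<exists>i. t + p = p ^ i) \<longleftrightarrow> p dvd t \<and> (\<exists>i. Suc (t div p) = p ^ i)"
proof
  assume "\<exists>i. t + p = p ^ i"
  then obtain i where i: "t + p = p ^ i" ..
  with assms obtain j where "i = Suc j"
    by (cases i) auto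
  with i have tp: "t + p = p * p ^ j"
    by simp
  then have "p dvd t"
    by (metis dvd_add_left_iff dvd_refl dvd_triv_left)
  then obtain s where "t = p * s" ..
  with tp have "p * Suc s = p * p ^ j"
    by (metis mult_Suc_right add.commute)
  then have "Suc s = p ^ j"
    using assms by (metis nat_mult_eq_cancel1 zero_less_one less_trans)
  with \<open>t = p * s\<close> assms have "Suc (t div p) = p ^ j"
    by simp
  with \<open>p dvd t\<close> show "p dvd t \<and> (\<exists>i. Suc (t div p) = p ^ i)"
    by blast
next
  assume "p dvd t \<and> (\<exists>i. Suc (t div p) = p ^ i)"
  then obtain s i where "t = p * s" and "Suc s = p ^ i"
    using assms by (auto elim!: dvdE)
  then have "t + p = p ^ Suc i"
    by (metis mult_Suc_right power_Suc add.commute)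
  then show "\<exists>i. t + p = p ^ i" ..
qed

lemma fps_deriv_AH_log_compose_X_power:
  assumes "1 < p"
  shows "(fps_deriv (AH_log_fps p) oo fps_X ^ p) * fps_X ^ (p - 1) = fps_deriv (AH_log_fps p) - 1"
proof (rule fps_ext)
  fix n
  show "((fps_deriv (AH_log_fps p) oo fps_X ^ p) * fps_X ^ (p - 1)) $ n
        = (fps_deriv (AH_log_fps p) - 1) $ n"
  proof (cases "n < p - 1")
    case True
    have "(\<exists>i. Suc n = p ^ i) \<longleftrightarrow> n = 0"
    proof
      assume "\<exists>i. Suc n = p ^ i"
      then obtain i where i: "Suc n = p ^ i" ..
      have "i = 0"
      proof (rule ccontr)
        assume "i \<noteq> 0"
        then have "p ^ 1 \<le> p ^ i"
          using assms by (intro power_increasing) auto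
        with i True show False
          by simp
      qed
      with i show "n = 0"
        by simp
    qed (auto intro: exI[of _ 0])
    with True show ?thesis
      by (simp add: fps_X_power_mult_right_nth fps_deriv_AH_log_nth del: fps_deriv_nth)
  next
    case False
    define t where "t = n - (p - 1)"
    have "Suc n = t + p" and "n \<noteq> 0"
      using False assms by (auto simp: t_def)
    have "((fps_deriv (AH_log_fps p) oo fps_X ^ p) * fps_X ^ (p - 1)) $ n
        = (fps_deriv (AH_log_fps p) oo fps_X ^ p) $ t"
      using False by (simp add: fps_X_power_mult_right_nth t_def)
    also have "\<dots> = (if p dvd t \<and> (\<exists>i. Suc (t div p) = p ^ i) then 1 else 0)"
      using assms by (simp add: fps_compose_X_power_nth fps_deriv_AH_log_nth del: fps_deriv_nth)
    also have "\<dots> = (if \<exists>i. Suc n = p ^ i then 1 else 0)"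
      by (simp only: \<open>Suc n = t + p\<close> add_eq_power_iff[OF assms])
    also have "\<dots> = (fps_deriv (AH_log_fps p) - 1) $ n"
      using \<open>n \<noteq> 0\<close> by (simp add: fps_deriv_AH_log_nth del: fps_deriv_nth)
    finally show ?thesis .
  qed
qed

theorem artin_hasse_compose_X_power:
  assumes "1 < p"
  shows "artin_hasse_fps p oo fps_X ^ p = artin_hasse_fps p ^ p * fps_exp (- of_nat p)"
proof -
  define A where "A = artin_hasse_fps p"
  define l where "l = fps_deriv (AH_log_fps p)"
  \<comment> \<open>both sides solve F' = F C with constant term 1\<close>
  define C where "C = fps_const (of_nat p :: rat) * (l - 1)"
  have X0: "(fps_X ^ p :: rat fps) $ 0 = 0"
    using assms by simp
  have dA: "fps_deriv A = A * l"
    unfolding A_def l_def by (rule fps_deriv_artin_hasse)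
  have "fps_deriv (A oo fps_X ^ p) = (fps_deriv A oo fps_X ^ p) * fps_deriv (fps_X ^ p)"
    by (rule fps_compose_deriv[OF X0])
  also have "\<dots> = (A oo fps_X ^ p) * ((l oo fps_X ^ p) * fps_X ^ (p - 1)) * fps_const (of_nat p)"
    by (simp add: dA fps_deriv_power fps_compose_mult_distrib[OF X0] algebra_simps)
  also have "\<dots> = (A oo fps_X ^ p) * C"
    unfolding l_def fps_deriv_AH_log_compose_X_power[OF assms] by (simp add: C_def l_def mult_ac)
  finally have deriv_lhs: "fps_deriv (A oo fps_X ^ p) = (A oo fps_X ^ p) * C" .
  have "fps_deriv (A ^ p) = fps_const (of_nat p) * l * (A * A ^ (p - 1))"
    by (simp only: fps_deriv_power dA mult_ac)
  also have "A * A ^ (p - 1) = A ^ p"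
    using assms by (simp flip: power_Suc)
  finally have "fps_deriv (A ^ p) = fps_const (of_nat p) * l * A ^ p" .
  then have deriv_rhs: "fps_deriv (A ^ p * fps_exp (- of_nat p)) = (A ^ p * fps_exp (- of_nat p)) * C"
    by (simp add: C_def algebra_simps fps_const_neg[symmetric] del: fps_const_neg)
  have "(A oo fps_X ^ p) $ 0 = (A ^ p * fps_exp (- of_nat p)) $ 0"
    by (simp add: A_def fps_power_zeroth)
  from fps_deriv_eq_mult_unique[OF deriv_lhs deriv_rhs this] show ?thesis
    unfolding A_def .
qed

section \<open>Valuations\<close>

locale valuation =
  fixes v :: "'a::field \<Rightarrow> ereal"
  assumes is_valuation: "is_valuation v"
begin

lemma val_eq_infinity_iff: "v x = \<infinity> \<longleftrightarrow> x = 0"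
  using is_valuation unfolding is_valuation_def by blast

lemma val_not_minf: "v x \<noteq> -\<infinity>"
  using is_valuation unfolding is_valuation_def by blast

lemma val_mult: "v (x * y) = v x + v y"
  using is_valuation unfolding is_valuation_def by blast

lemma val_add_ge_min: "min (v x) (v y) \<le> v (x + y)"
  using is_valuation unfolding is_valuation_def by blast

lemma val_zero [simp]: "v 0 = \<infinity>"
  by (simp add: val_eq_infinity_iff)

lemma val_one [simp]: "v 1 = 0"
proof -
  have "v 1 = v 1 + v 1"
    using val_mult[of 1 1] by simp
  then show ?thesis
    using val_eq_infinity_iff[of 1] val_not_minf[of 1] by (cases "v 1") auto
qed

lemma val_minus_one [simp]: "v (- 1) = 0"
proof -
  have "v (- 1) + v (- 1) = 0"
    using val_mult[of "- 1" "- 1"] by simp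
  then show ?thesis
    using val_not_minf[of "- 1"] by (cases "v (- 1)") auto
qed

lemma val_uminus [simp]: "v (- x) = v x"
  using val_mult[of "- 1" x] by simp

lemma val_add_ge: "ereal a \<le> v x \<Longrightarrow> ereal a \<le> v y \<Longrightarrow> ereal a \<le> v (x + y)"
  using val_add_ge_min[of x y] by (meson min.bounded_iff order_trans)

lemma val_diff_ge: "ereal a \<le> v x \<Longrightarrow> ereal a \<le> v y \<Longrightarrow> ereal a \<le> v (x - y)"
  using val_add_ge[of a x "- y"] by simp

lemma val_mult_ge: "ereal a \<le> v x \<Longrightarrow> ereal b \<le> v y \<Longrightarrow> ereal (a + b) \<le> v (x * y)"
  using val_mult[of x y] by (metis add_mono plus_ereal.simps(1))

lemma val_sum_ge:
  "(\<And>i. i \<in> A \<Longrightarrow> ereal a \<le> v (f i)) \<Longrightarrow> ereal a \<le> v (sum f A)"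
  by (induction A rule: infinite_finite_induct) (auto intro!: val_add_ge)

lemma val_power_ge: "ereal a \<le> v x \<Longrightarrow> ereal (real n * a) \<le> v (x ^ n)"
proof (induction n)
  case (Suc n)
  then have "ereal (a + real n * a) \<le> v (x * x ^ n)"
    by (intro val_mult_ge)
  then show ?case
    by (simp add: algebra_simps)
qed simp

lemma val_of_nat_nonneg: "0 \<le> v (of_nat n)"
proof (induction n)
  case (Suc n)
  then have "ereal 0 \<le> v (1 + of_nat n)"
    by (intro val_add_ge) (auto simp: zero_ereal_def)
  then show ?case
    by (simp add: zero_ereal_def)
qed simp

lemma val_of_int_nonneg: "0 \<le> v (of_int a)"
proof (cases "a \<ge> 0")
  case True
  then show ?thesis
    using val_of_nat_nonneg[of "nat a"] by simp
next
  case False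
  then have "of_int a = - (of_nat (nat (- a)) :: 'a)"
    by simp
  then show ?thesis
    using val_of_nat_nonneg[of "nat (- a)"] by simp
qed

lemma val_power_diff_ge:
  assumes "ereal (2 * e) \<le> v (x - y)" and "ereal e \<le> v x" and "ereal e \<le> v y"
  shows "ereal ((real N + 1) * e) \<le> v (x ^ N - y ^ N)"
proof (cases "N = 0")
  case False
  have "ereal ((real N - 1) * e) \<le> v (\<Sum>i<N. y ^ (N - Suc i) * x ^ i)"
  proof (rule val_sum_ge)
    fix i
    assume "i \<in> {..<N}"
    then have "real (N - Suc i) * e + real i * e = (real N - 1) * e"
      by (simp add: of_nat_diff algebra_simps)
    moreover have "ereal (real (N - Suc i) * e + real i * e) \<le> v (y ^ (N - Suc i) * x ^ i)"
      using assms(2,3) by (intro val_mult_ge val_power_ge)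
    ultimately show "ereal ((real N - 1) * e) \<le> v (y ^ (N - Suc i) * x ^ i)"
      by simp
  qed
  then have "ereal (2 * e + (real N - 1) * e) \<le> v ((x - y) * (\<Sum>i<N. y ^ (N - Suc i) * x ^ i))"
    by (rule val_mult_ge[OF assms(1)])
  then show ?thesis
    by (simp add: power_diff_sumr2 algebra_simps)
qed simp

end

locale p_valuation = valuation v for v :: "'a::field_char_0 \<Rightarrow> ereal" +
  fixes p :: nat
  assumes prime_p: "prime p" and val_p: "v (of_nat p) = 1"
begin

lemma val_of_nat_p_power: "v (of_nat p ^ k) = real k"
  by (induction k) (simp_all add: val_mult val_p)

lemma val_nonneg_if_val_p_mult_ge_one: "1 \<le> v (of_nat p * x) \<Longrightarrow> 0 \<le> v x"
  using val_not_minf[of x] by (cases "v x") (simp_all add: val_mult val_p)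

lemma val_of_int_ge_one:
  assumes "int p dvd a"
  shows "1 \<le> v (of_int a)"
proof -
  obtain k where "a = int p * k"
    using assms ..
  then have "v (of_int a) = 1 + v (of_int k)"
    by (simp add: val_mult val_p)
  then show ?thesis
    using val_of_int_nonneg[of k] by (simp add: add_increasing2)
qed

lemma val_of_int_eq_zero:
  assumes "\<not> int p dvd a"
  shows "v (of_int a) = 0"
proof (rule antisym[OF _ val_of_int_nonneg], rule ccontr)
  assume pos: "\<not> v (of_int a) \<le> 0"
  have "coprime (int p) a"
    using assms prime_p by (simp add: prime_imp_coprime)
  then obtain s t where "s * int p + t * a = 1"
    using bezout_int[of "int p" a] by auto
  then have "1 = of_int s * of_nat p + of_int t * (of_int a :: 'a)"
    by (metis of_int_1 of_int_add of_int_mult of_int_of_nat_eq)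
  moreover have "0 < v (of_int s * of_nat p)"
    using val_of_int_nonneg[of s] by (simp add: val_mult val_p add_nonneg_pos)
  moreover have "0 < v (of_int t * (of_int a :: 'a))"
    using val_of_int_nonneg[of t] pos by (simp add: val_mult add_nonneg_pos)
  ultimately have "0 < v (1 :: 'a)"
    using val_add_ge_min[of "of_int s * of_nat p" "of_int t * (of_int a :: 'a)"]
    by (metis min_less_iff_conj less_le_trans)
  then show False
    by simp
qed

lemma val_of_nat_multiplicity:
  assumes "n > 0"
  shows "v (of_nat n) = real (multiplicity p n)"
proof -
  obtain y where y: "n = p ^ multiplicity p n * y" and "\<not> p dvd y"
    using multiplicity_decompose'[of n p] assms prime_gt_1_nat[OF prime_p] by auto
  then have "v (of_nat y) = 0"
    using val_of_int_eq_zero[of "int y"] by simp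
  then show ?thesis
    by (subst y) (simp add: val_mult val_of_nat_p_power)
qed

lemma val_of_nat_prime_power_choose:
  assumes "0 < j" and "j < p ^ k"
  shows "1 \<le> v (of_nat (p ^ k choose j))"
  using val_of_int_ge_one[of "int (p ^ k choose j)"] prime_dvd_prime_power_choose[OF prime_p assms]
  by simp

lemma val_of_rat_denominator:
  assumes "0 \<le> v (of_rat r)" and "quotient_of r = (a, b)"
  shows "\<not> int p dvd b"
proof
  assume "int p dvd b"
  moreover have "coprime a b" and "of_rat r * of_int b = (of_int a :: 'a)"
    using assms(2) quotient_of_coprime quotient_of_div[OF assms(2)] quotient_of_denom_pos[OF assms(2)]
    by (auto simp: of_rat_divide)
  moreover have "\<not> is_unit (int p)"
    using prime_gt_1_nat[OF prime_p] by simp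
  ultimately have "\<not> int p dvd a"
    using coprime_common_divisor by blast
  then have "v (of_int a :: 'a) = 0"
    by (rule val_of_int_eq_zero)
  moreover have "1 \<le> v (of_rat r * of_int b :: 'a)"
    using add_mono[OF assms(1) val_of_int_ge_one[OF \<open>int p dvd b\<close>]] by (simp add: val_mult)
  ultimately show False
    using \<open>of_rat r * of_int b = of_int a\<close> by simp
qed

lemma val_of_rat_power_p_diff:
  assumes "0 \<le> v (of_rat r)"
  shows "1 \<le> v (of_rat (r ^ p - r))"
proof -
  obtain a b where ab: "quotient_of r = (a, b)"
    by (cases "quotient_of r")
  have r_eq: "of_rat r * of_int b = (of_int a :: 'a)"
    using quotient_of_div[OF ab] quotient_of_denom_pos[OF ab] by (auto simp: of_rat_divide)
  have "prime (int p)"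
    using prime_p by simp
  then have "\<not> int p dvd b ^ (p + 1)"
    using val_of_rat_denominator[OF assms ab] prime_dvd_power by blast
  then have "v (of_int (b ^ (p + 1)) :: 'a) = 0"
    by (rule val_of_int_eq_zero)
  have "[a ^ p * b = a * b ^ p] (mod int p)"
    using fermat_int[OF prime_p, of a] fermat_int[OF prime_p, of b]
    by (metis cong_scalar_left cong_scalar_right cong_sym cong_trans mult.commute)
  then have "1 \<le> v (of_int (a ^ p * b - a * b ^ p) :: 'a)"
    by (intro val_of_int_ge_one) (simp add: cong_iff_dvd_diff)
  moreover have "of_rat (r ^ p - r) * of_int (b ^ (p + 1)) = (of_int (a ^ p * b - a * b ^ p) :: 'a)"
    by (simp flip: r_eq add: of_rat_diff of_rat_power algebra_simps power_mult_distrib)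
  ultimately show ?thesis
    using \<open>v (of_int (b ^ (p + 1))) = 0\<close> by (metis add.right_neutral val_mult)
qed

end

section \<open>p-integral power series and the Frobenius congruence\<close>

context p_valuation
begin

definition p_integral_fps :: "rat fps \<Rightarrow> bool" where
  "p_integral_fps f \<longleftrightarrow> (\<forall>n. 0 \<le> v (of_rat (f $ n)))"

definition fps_cong_mod_p :: "rat fps \<Rightarrow> rat fps \<Rightarrow> bool" where
  "fps_cong_mod_p f g \<longleftrightarrow> (\<forall>n. 1 \<le> v (of_rat ((f - g) $ n)))"

lemma val_fps_mult_nth_ge:
  assumes "\<And>i. i \<le> n \<Longrightarrow> ereal a \<le> v (of_rat (f $ i))"
    and "\<And>i. i \<le> n \<Longrightarrow> ereal b \<le> v (of_rat (g $ i))"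
  shows "ereal (a + b) \<le> v (of_rat ((f * g) $ n))"
  unfolding fps_mult_nth of_rat_sum of_rat_mult
  using assms by (intro val_sum_ge val_mult_ge) auto

lemma p_integral_fps_mult:
  "p_integral_fps f \<Longrightarrow> p_integral_fps g \<Longrightarrow> p_integral_fps (f * g)"
  unfolding p_integral_fps_def using val_fps_mult_nth_ge[of _ 0 f 0 g]
  by (simp add: zero_ereal_def)

lemma p_integral_fps_power:
  assumes "p_integral_fps f"
  shows "p_integral_fps (f ^ k)"
proof (induction k)
  case 0
  then show ?case
    by (simp add: p_integral_fps_def fps_one_nth)
next
  case (Suc k)
  then show ?case
    using assms by (simp add: p_integral_fps_mult)
qed

lemma p_integral_fps_cutoff:
  "(\<And>i. i < n \<Longrightarrow> 0 \<le> v (of_rat (f $ i))) \<Longrightarrow> p_integral_fps (fps_cutoff n f)"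
  by (simp add: p_integral_fps_def)

lemma fps_cong_mod_p_add:
  assumes "fps_cong_mod_p f g" and "fps_cong_mod_p f' g'"
  shows "fps_cong_mod_p (f + f') (g + g')"
  unfolding fps_cong_mod_p_def
proof
  fix n
  have "ereal 1 \<le> v (of_rat ((f - g) $ n + (f' - g') $ n))"
    using assms unfolding of_rat_add fps_cong_mod_p_def by (intro val_add_ge) (auto simp: one_ereal_def)
  then show "1 \<le> v (of_rat ((f + f' - (g + g')) $ n))"
    by (simp add: algebra_simps one_ereal_def)
qed

lemma fps_cong_mod_p_trans:
  assumes "fps_cong_mod_p f g" and "fps_cong_mod_p g h"
  shows "fps_cong_mod_p f h"
  using fps_cong_mod_p_add[OF assms] by (simp add: fps_cong_mod_p_def)

lemma fps_cong_mod_p_add_power_p: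
  assumes "p_integral_fps f" and "p_integral_fps g"
  shows "fps_cong_mod_p ((f + g) ^ p) (f ^ p + g ^ p)"
  unfolding fps_cong_mod_p_def
proof
  fix n
  have "1 \<le> p"
    using prime_gt_0_nat[OF prime_p] by simp
  then have "(f + g) ^ p - (f ^ p + g ^ p)
      = (\<Sum>k\<in>{1..<p}. fps_const (of_nat (p choose k)) * (f ^ k * g ^ (p - k)))"
    by (simp add: binomial_ring_middle fps_of_nat mult.assoc)
  moreover have "ereal 1 \<le> v (\<Sum>k\<in>{1..<p}. of_rat (of_nat (p choose k) * (f ^ k * g ^ (p - k)) $ n))"
  proof (rule val_sum_ge)
    fix k
    assume "k \<in> {1..<p}"
    have "ereal (1 + 0) \<le> v (of_rat (of_nat (p choose k) * (f ^ k * g ^ (p - k)) $ n))"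
      unfolding of_rat_mult of_rat_of_nat_eq
    proof (rule val_mult_ge)
      show "ereal 1 \<le> v (of_nat (p choose k))"
        using val_of_nat_prime_power_choose[of k 1] \<open>k \<in> {1..<p}\<close> by (simp add: one_ereal_def)
      show "ereal 0 \<le> v (of_rat ((f ^ k * g ^ (p - k)) $ n))"
        using assms p_integral_fps_mult p_integral_fps_power
        by (simp add: p_integral_fps_def zero_ereal_def)
    qed
    then show "ereal 1 \<le> v (of_rat (of_nat (p choose k) * (f ^ k * g ^ (p - k)) $ n))"
      by simp
  qed
  ultimately show "1 \<le> v (of_rat (((f + g) ^ p - (f ^ p + g ^ p)) $ n))"
    by (simp add: fps_sum_nth of_rat_sum one_ereal_def)
qed

lemma fps_cong_mod_p_monom_power_p:
  assumes "0 \<le> v (of_rat c)"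
  shows "fps_cong_mod_p ((fps_const c * fps_X ^ k) ^ p) (fps_const c * fps_X ^ k oo fps_X ^ p)"
proof -
  have X0: "(fps_X ^ p :: rat fps) $ 0 = 0"
    using prime_gt_0_nat[OF prime_p] by simp
  have power_eq: "(fps_const c * fps_X ^ k) ^ p = fps_const (c ^ p) * fps_X ^ (p * k)"
    by (simp add: power_mult_distrib fps_const_power mult.commute flip: power_mult)
  have compose_eq: "fps_const c * fps_X ^ k oo fps_X ^ p = fps_const c * fps_X ^ (p * k)"
    by (simp add: fps_compose_mult_distrib[OF X0] fps_X_power_compose[OF X0] power_mult)
  have nth_eq: "(fps_const (c ^ p) * fps_X ^ (p * k) - fps_const c * fps_X ^ (p * k)) $ n
      = (if n = p * k then c ^ p - c else 0)" for n
    by (simp add: fps_X_power_nth)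
  show ?thesis
    unfolding fps_cong_mod_p_def power_eq compose_eq nth_eq
    using val_of_rat_power_p_diff[OF assms] by simp
qed

lemma fps_cong_mod_p_cutoff_power_p:
  assumes "p_integral_fps f"
  shows "fps_cong_mod_p (fps_cutoff n f ^ p) (fps_cutoff n f oo fps_X ^ p)"
proof (induction n)
  case 0
  then show ?case
    using prime_gt_0_nat[OF prime_p] by (simp add: fps_cong_mod_p_def zero_power)
next
  case (Suc n)
  define P where "P = fps_cutoff n f"
  define B where "B = fps_const (f $ n) * fps_X ^ n"
  have "0 \<le> v (of_rat (f $ n))"
    using assms by (simp add: p_integral_fps_def)
  then have "fps_cong_mod_p (P ^ p + B ^ p) ((P oo fps_X ^ p) + (B oo fps_X ^ p))"
    unfolding B_def P_def by (intro fps_cong_mod_p_add Suc.IH fps_cong_mod_p_monom_power_p)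
  moreover have "p_integral_fps P" and "p_integral_fps B"
    using assms \<open>0 \<le> v (of_rat (f $ n))\<close>
    by (auto simp: P_def B_def p_integral_fps_def fps_X_power_nth)
  ultimately have "fps_cong_mod_p ((P + B) ^ p) ((P oo fps_X ^ p) + (B oo fps_X ^ p))"
    using fps_cong_mod_p_add_power_p fps_cong_mod_p_trans by blast
  then show ?case
    by (simp add: fps_cutoff_Suc fps_compose_add_distrib flip: P_def B_def)
qed

theorem fps_cong_mod_p_power_p:
  assumes "p_integral_fps f"
  shows "fps_cong_mod_p (f ^ p) (f oo fps_X ^ p)"
  unfolding fps_cong_mod_p_def
proof
  fix n
  define P where "P = fps_cutoff (Suc n) f"
  have "p > 0"
    using prime_gt_0_nat[OF prime_p] .
  have "(f ^ p) $ n = (P ^ p) $ n"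
    by (rule fps_power_nth_eq_below[of "Suc n"]) (simp_all add: P_def)
  moreover have "(f oo fps_X ^ p) $ n = (P oo fps_X ^ p) $ n"
    using \<open>p > 0\<close> by (simp add: fps_compose_X_power_nth P_def le_imp_less_Suc div_le_dividend)
  moreover have "fps_cong_mod_p (P ^ p) (P oo fps_X ^ p)"
    unfolding P_def by (rule fps_cong_mod_p_cutoff_power_p[OF assms])
  ultimately show "1 \<le> v (of_rat ((f ^ p - (f oo fps_X ^ p)) $ n))"
    by (simp add: fps_cong_mod_p_def)
qed

end

section \<open>p-integrality of the Artin-Hasse exponential\<close>

context p_valuation
begin

lemma val_fps_exp_neg_p_nth:
  assumes "1 \<le> n"
  shows "1 \<le> v (of_rat (fps_exp (- of_nat p) $ n))"
proof -
  define z where "z = v (of_rat (fps_exp (- of_nat p) $ n))"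
  have "of_rat (fact n) = (fact n :: 'a)"
    by (metis of_nat_fact of_rat_of_nat_eq)
  then have "of_rat (fps_exp (- of_nat p) $ n) * fact n = ((- of_nat p) ^ n :: 'a)"
    by (simp add: of_rat_divide of_rat_power of_rat_minus)
  from arg_cong[OF this, of v] have "z + v (fact n) = v ((- of_nat p) ^ n :: 'a)"
    by (simp only: val_mult z_def)
  moreover have "v ((- of_nat p) ^ n :: 'a) = real n"
    using val_of_nat_p_power[of n] by (cases "even n") (simp_all add: power_minus_odd)
  moreover have "v (fact n :: 'a) = real (multiplicity p (fact n :: nat))"
    using val_of_nat_multiplicity[of "fact n"] by simp
  moreover have "multiplicity p (fact n :: nat) < n"
    by (rule multiplicity_fact_less[OF prime_p assms])
  ultimately show ?thesis
    using val_not_minf unfolding z_def[symmetric] by (cases z) auto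
qed

lemma val_fps_mult_exp_minus_one_nth:
  assumes "\<And>i. i < n \<Longrightarrow> 0 \<le> v (of_rat (f $ i))"
  shows "ereal 1 \<le> v (of_rat ((f * (fps_exp (- of_nat p) - 1)) $ n))"
  unfolding fps_mult_nth of_rat_sum of_rat_mult
proof (rule val_sum_ge)
  fix i
  assume "i \<in> {0..n}"
  show "ereal 1 \<le> v (of_rat (f $ i) * of_rat ((fps_exp (- of_nat p) - 1) $ (n - i)))"
  proof (cases "i = n")
    case False
    with \<open>i \<in> {0..n}\<close> have "i < n"
      by simp
    then have "ereal 0 \<le> v (of_rat (f $ i))"
      using assms by (simp add: zero_ereal_def)
    moreover have "ereal 1 \<le> v (of_rat ((fps_exp (- of_nat p) - 1) $ (n - i)))"
      using val_fps_exp_neg_p_nth[of "n - i"] \<open>i < n\<close> by (simp add: one_ereal_def)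
    ultimately show ?thesis
      using val_mult_ge[of 0 "of_rat (f $ i)" 1] by simp
  qed simp
qed

theorem artin_hasse_p_integral: "p_integral_fps (artin_hasse_fps p)"
  unfolding p_integral_fps_def
proof
  fix n
  show "0 \<le> v (of_rat (artin_hasse_fps p $ n))"
  proof (induction n rule: less_induct)
    case (less n)
    define A where "A = artin_hasse_fps p"
    define P where "P = fps_cutoff n A"
    define e where "e = (fps_exp (- of_nat p) :: rat fps) - 1"
    have "1 < p"
      using prime_gt_1_nat[OF prime_p] .
    show ?case
    proof (cases "n = 0")
      case False
      have below: "\<And>i. i < n \<Longrightarrow> A $ i = P $ i"
        by (simp add: P_def)
      have "p_integral_fps P"
        unfolding P_def A_def by (rule p_integral_fps_cutoff) (rule less)
      \<comment> \<open>In Dwork's identity A(X^p) = A^p (1 + e), A $ n enters the n-th coefficient only via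
        (A^p) $ n = (P^p) $ n + p A $ n; all other terms are known to be p-integral or divisible by p.\<close>
      have "(A ^ p) $ n - (P ^ p) $ n = of_nat p * A $ n"
        using fps_power_nth_diff_first[of n A P p, OF below] False by (simp add: P_def A_def)
      moreover have "A oo fps_X ^ p = A ^ p + A ^ p * e"
        using artin_hasse_compose_X_power[OF \<open>1 < p\<close>] by (simp add: A_def e_def right_diff_distrib)
      then have "(A ^ p) $ n = (A oo fps_X ^ p) $ n - (A ^ p * e) $ n"
        by simp
      moreover have "(A oo fps_X ^ p) $ n = (P oo fps_X ^ p) $ n"
        using \<open>1 < p\<close> False by (simp add: fps_compose_X_power_nth P_def)
      ultimately have p_times_nth:
        "of_nat p * A $ n = - ((P ^ p - (P oo fps_X ^ p)) $ n) - (A ^ p * e) $ n"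
        by simp
      have "ereal 1 \<le> v (of_rat ((P ^ p - (P oo fps_X ^ p)) $ n))"
        using fps_cong_mod_p_power_p[OF \<open>p_integral_fps P\<close>]
        by (simp add: fps_cong_mod_p_def one_ereal_def)
      moreover have "ereal 1 \<le> v (of_rat ((A ^ p * e) $ n))"
        unfolding e_def
      proof (rule val_fps_mult_exp_minus_one_nth)
        fix i
        assume "i < n"
        then show "0 \<le> v (of_rat ((A ^ p) $ i))"
          using fps_power_nth_eq_below[OF below \<open>i < n\<close>] p_integral_fps_power[OF \<open>p_integral_fps P\<close>]
          by (simp add: p_integral_fps_def)
      qed
      ultimately have "ereal 1 \<le> v (- of_rat ((P ^ p - (P oo fps_X ^ p)) $ n) - of_rat ((A ^ p * e) $ n) :: 'a)"
        by (intro val_diff_ge) simp_all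
      then have "ereal 1 \<le> v (of_rat (of_nat p * A $ n) :: 'a)"
        unfolding p_times_nth of_rat_diff of_rat_minus .
      then have "1 \<le> v (of_nat p * of_rat (A $ n) :: 'a)"
        by (simp add: of_rat_mult one_ereal_def)
      then show ?thesis
        unfolding A_def by (rule val_nonneg_if_val_p_mult_ge_one)
    qed simp
  qed
qed

section \<open>Evaluation of the Artin-Hasse series\<close>

lemma artin_hasse_eval_approx:
  assumes "fps_val_eval v (artin_hasse_fps p) x w" and "ereal e \<le> v x" and "0 \<le> e"
  shows "ereal (2 * e) \<le> v (w - 1 - x)"
proof -
  define S where "S N = (\<Sum>k<N. of_rat (artin_hasse_fps p $ k) * x ^ k)" for N
  obtain N0 where N0: "\<And>N. N \<ge> N0 \<Longrightarrow> ereal (2 * e) \<le> v (S N - w)"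
    using assms(1) unfolding fps_val_eval_def val_sums_def val_tendsto_def S_def by blast
  define N where "N = max N0 2"
  have "{..<N} = insert 0 (insert 1 {2..<N})"
    by (auto simp: N_def)
  then have "S N - 1 - x = (\<Sum>k\<in>{2..<N}. of_rat (artin_hasse_fps p $ k) * x ^ k)"
    by (simp add: S_def artin_hasse_fps_nth_1[unfolded One_nat_def])
  moreover have "ereal (2 * e) \<le> v (\<Sum>k\<in>{2..<N}. of_rat (artin_hasse_fps p $ k) * x ^ k)"
  proof (rule val_sum_ge)
    fix k
    assume "k \<in> {2..<N}"
    then have "2 * e \<le> 0 + real k * e"
      using assms(3) by (simp add: mult_right_mono)
    moreover have "ereal (0 + real k * e) \<le> v (of_rat (artin_hasse_fps p $ k) * x ^ k)"
      using artin_hasse_p_integral assms(2)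
      by (intro val_mult_ge val_power_ge) (auto simp: p_integral_fps_def zero_ereal_def)
    ultimately show "ereal (2 * e) \<le> v (of_rat (artin_hasse_fps p $ k) * x ^ k)"
      by (meson ereal_less_eq(3) order_trans)
  qed
  moreover have "ereal (2 * e) \<le> v (S N - w)"
    by (rule N0) (simp add: N_def)
  moreover have "w - 1 - x = (S N - 1 - x) - (S N - w)"
    by simp
  ultimately show ?thesis
    by (metis val_diff_ge)
qed

lemma val_one_plus_power_p_power:
  assumes "ereal e \<le> v x" and "0 \<le> e" and "real (p ^ k) * e \<le> 1"
  shows "ereal ((real (p ^ k) + 1) * e) \<le> v ((x + 1) ^ (p ^ k) - 1 - x ^ (p ^ k))"
proof -
  define N where "N = p ^ k"
  have "N \<ge> 1"
    using prime_gt_0_nat[OF prime_p] by (simp add: N_def)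
  then have "(x + 1) ^ N - 1 - x ^ N = (\<Sum>j\<in>{1..<N}. of_nat (N choose j) * x ^ j)"
    by (simp add: binomial_ring_middle)
  moreover have "ereal ((real N + 1) * e) \<le> v (\<Sum>j\<in>{1..<N}. of_nat (N choose j) * x ^ j)"
  proof (rule val_sum_ge)
    fix j
    assume "j \<in> {1..<N}"
    then have "ereal (1 + real j * e) \<le> v (of_nat (N choose j) * x ^ j)"
      using val_of_nat_prime_power_choose[of j k] assms(1)
      by (intro val_mult_ge val_power_ge) (auto simp: N_def one_ereal_def)
    moreover have "e * 1 \<le> e * real j"
      using \<open>j \<in> {1..<N}\<close> assms(2) by (intro mult_left_mono) auto
    then have "(real N + 1) * e \<le> 1 + real j * e"
      using assms(3) by (simp add: N_def algebra_simps)
    ultimately show "ereal ((real N + 1) * e) \<le> v (of_nat (N choose j) * x ^ j)"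
      by (meson ereal_less_eq(3) order_trans)
  qed
  ultimately show ?thesis
    by (simp add: N_def)
qed

lemma artin_hasse_eval_power_approx:
  assumes Ex: "fps_val_eval v (artin_hasse_fps p) x z"
    and Ey: "fps_val_eval v (artin_hasse_fps p) y (z ^ p ^ k)"
    and vx: "ereal e \<le> v x" and vy: "ereal (real (p ^ k) * e) \<le> v y"
    and "0 \<le> e" and small: "real (p ^ k) * e \<le> 1"
  shows "ereal ((real (p ^ k) + 1) * e) \<le> v (y - x ^ p ^ k)"
proof -
  define N where "N = p ^ k"
  define u where "u = z - 1"
  have "N \<ge> 1"
    using prime_gt_0_nat[OF prime_p] by (simp add: N_def)
  have hx: "ereal (2 * e) \<le> v (u - x)"
    using artin_hasse_eval_approx[OF Ex vx \<open>0 \<le> e\<close>] by (simp add: u_def)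
  have hy: "ereal (2 * (real N * e)) \<le> v (z ^ N - 1 - y)"
    using artin_hasse_eval_approx[OF Ey vy] \<open>0 \<le> e\<close> by (simp add: N_def)
  have "ereal e \<le> v ((u - x) + x)"
    using hx vx \<open>0 \<le> e\<close> by (intro val_add_ge) (auto intro: order_trans[rotated])
  then have vu: "ereal e \<le> v u"
    by simp
  have binom: "ereal ((real N + 1) * e) \<le> v ((u + 1) ^ N - 1 - u ^ N)"
    unfolding N_def using vu \<open>0 \<le> e\<close> small by (rule val_one_plus_power_p_power)
  have power: "ereal ((real N + 1) * e) \<le> v (u ^ N - x ^ N)"
    using hx vu vx by (rule val_power_diff_ge)
  have "1 * e \<le> real N * e"
    using \<open>N \<ge> 1\<close> \<open>0 \<le> e\<close> by (intro mult_right_mono) auto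
  then have "(real N + 1) * e \<le> 2 * (real N * e)"
    by (simp add: algebra_simps)
  with hy have "ereal ((real N + 1) * e) \<le> v (z ^ N - 1 - y)"
    by (meson ereal_less_eq(3) order_trans)
  moreover have "y - x ^ N = (((u + 1) ^ N - 1 - u ^ N) - (z ^ N - 1 - y)) + (u ^ N - x ^ N)"
    by (simp add: u_def)
  ultimately show ?thesis
    using binom power unfolding N_def by (metis val_add_ge val_diff_ge)
qed

end

theorem lemma3p2:
  fixes p m :: nat and ord :: "'a::field_char_0 \<Rightarrow> ereal"
    and \<zeta> :: 'a and \<pi> :: "nat \<Rightarrow> 'a"
  assumes "prime p" and "m \<ge> 1"
    and "alg_closed_field TYPE('a)"
    and "is_valuation ord" and "ord (of_nat p) = 1"
    and "primitive_root_of_unity (p ^ m) \<zeta>"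
    and root: "\<And>l. 1 \<le> l \<Longrightarrow> l \<le> m \<Longrightarrow> fps_val_eval ord (AH_log_fps p) (\<pi> l) 0"
    and ordpi: "\<And>l. 1 \<le> l \<Longrightarrow> l \<le> m \<Longrightarrow>
                  ord (\<pi> l) = ereal (1 / (real p ^ (l - 1) * (real p - 1)))"
    and E: "\<And>l. 1 \<le> l \<Longrightarrow> l \<le> m \<Longrightarrow>
                  fps_val_eval ord (artin_hasse_fps p) (\<pi> l) (\<zeta> ^ (p ^ (m - l)))"
    and "1 \<le> l" and "l \<le> m"
  shows "ord (\<pi> l - \<pi> m ^ (p ^ (m - l))) \<ge> ereal (real (p ^ (m - l) + 1)) * ord (\<pi> m)"
proof -
  \<comment> \<open>Only the orders of the \<pi> l and the values E(\<pi> l) are used.\<close>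
  interpret p_valuation ord p
    using assms(1,4,5) by unfold_locales
  define e where "e = 1 / (real p ^ (m - 1) * (real p - 1))"
  have "real p \<ge> 2"
    using prime_ge_2_nat[OF assms(1)] by simp
  then have "0 < e"
    by (simp add: e_def)
  have ord_m: "ord (\<pi> m) = e" and ord_l: "ord (\<pi> l) = real (p ^ (m - l)) * e"
    using ordpi[of m] ordpi[of l] assms(2,10,11) \<open>real p \<ge> 2\<close>
    by (simp_all add: e_def field_simps flip: power_add)
  have "1 \<le> real p ^ (l - 1) * (real p - 1)"
    using \<open>real p \<ge> 2\<close> one_le_power[of "real p" "l - 1"] mult_mono[of 1 _ 1 "real p - 1"] by simp
  then have "real (p ^ (m - l)) * e \<le> 1"
    using ordpi[of l] assms(10,11) ord_l by simp
  then have "ereal ((real (p ^ (m - l)) + 1) * e) \<le> ord (\<pi> l - \<pi> m ^ p ^ (m - l))"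
    using E[of m] E[of l] assms(2,10,11) ord_m ord_l \<open>0 < e\<close>
    by (intro artin_hasse_eval_power_approx[where z = \<zeta>]) simp_all
  then show ?thesis
    using ord_m by (simp add: add.commute)
qed

end
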